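(* Let $\hat{\mathbb{N}}$ be the set of odd integers $n\ge3$, let $n \in \hat{\mathbb{N}}$ and $M \subseteq \hat{\mathbb{N}} \setminus \{n\}$. Let $T$ be the set of all partial Boolean functions whose domain does not contain the all-zero tuple. Then $\mathrm{pPol}\, R^{0,2}_n \not\supseteq T \cap \bigcap_{m \in M} \mathrm{pPol}\, R^{0,2}_m$.
   Context: Partial functions are on $\{0,1\}$: an $n$-ary partial function is a map $f:\operatorname{dom} f\to\{0,1\}$ with $\operatorname{dom} f\subseteq\{0,1\}^n$; an empty intersection of subsets of the set of all partial functions is understood as the set of all partial functions. For $\rho\subseteq\{0,1\}^h$, $\mathrm{pPol}\,\rho$ is the set of partial functions $f$ such that for every $h\times n$ matrix whose rows lie in $\operatorname{dom} f$ and whose columns lie in $\rho$, the column obtained by applying $f$ row-wise lies in $\rho$. Let $\rho_{0,2}=\{(0,0),(0,1),(1,0)\}$. For $n\ge2$, $R^{0,2}_{C,n}=\{(x_1,\dots,x_n)\in\{0,1\}^n: (x_i,x_{i+1})\in\rho_{0,2}\text{ for } i\in[n], \text{ with } x_{n+1}:=x_1\}$, $R^{0,2}_{K,n}=\{(x_1,\dots,x_n): (x_i,x_j)\in\rho_{0,2}\text{ for all } i\ne j\}$, and $R^{0,2}_n=R^{0,2}_{C,n}\times R^{0,2}_{K,n}\subseteq\{0,1\}^{2n}$. *)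

theory Defs
  imports Main
begin

text \<open>A partial Boolean function of arity n: a pair (n, f) where f maps tuples
  (lists of length n over {0,1}) in its domain to a value in {0,1}; None outside
  the domain.\<close>

type_synonym pfun = "nat \<times> (nat list \<Rightarrow> nat option)"

definition is_pfun :: "pfun \<Rightarrow> bool" where
  "is_pfun p \<longleftrightarrow> fst p \<ge> 1 \<and>
     (\<forall>x \<in> dom (snd p). length x = fst p \<and> set x \<subseteq> {0,1}) \<and>
     (\<forall>x y. snd p x = Some y \<longrightarrow> y \<in> {0,1})"

definition pPol :: "nat \<Rightarrow> nat list set \<Rightarrow> pfun set" where
  "pPol h \<rho> = {p. is_pfun p \<and>
     (\<forall>rows. length rows = h \<and> (\<forall>r \<in> set rows. r \<in> dom (snd p)) \<and>
        (\<forall>j < fst p. map (\<lambda>r. r ! j) rows \<in> \<rho>)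
        \<longrightarrow> map (\<lambda>r. the (snd p r)) rows \<in> \<rho>)}"

definition rho02 :: "(nat \<times> nat) set" where
  "rho02 = {(0,0), (0,1), (1,0)}"

definition RC02 :: "nat \<Rightarrow> nat list set" where
  "RC02 n = {x. length x = n \<and> set x \<subseteq> {0,1} \<and>
     (\<forall>i < n. (x ! i, x ! ((i + 1) mod n)) \<in> rho02)}"

definition RK02 :: "nat \<Rightarrow> nat list set" where
  "RK02 n = {x. length x = n \<and> set x \<subseteq> {0,1} \<and>
     (\<forall>i < n. \<forall>j < n. i \<noteq> j \<longrightarrow> (x ! i, x ! j) \<in> rho02)}"

definition R02 :: "nat \<Rightarrow> nat list set" where
  "R02 n = {x @ y | x y. x \<in> RC02 n \<and> y \<in> RK02 n}"

definition Nhat :: "nat set" where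
  "Nhat = {n. odd n \<and> n \<ge> 3}"

definition Tzero :: "pfun set" where
  "Tzero = {p. is_pfun p \<and> replicate (fst p) 0 \<notin> dom (snd p)}"

end

theory Submission
  imports Defs
begin

text \<open>A partial function is a polymorphism of \<open>R02 m\<close> iff, on the graph of its domain in which
  two rows are adjacent when they have no common 1, it maps closed walks of length \<open>m\<close> to closed
  walks of \<open>rho02\<close> and \<open>m\<close>-cliques to \<open>m\<close>-cliques. Every finite loopless graph is such a domain,
  and the domain avoids the zero tuple. Take the disjoint union of the cycle \<open>C\<^sub>n\<close> and the
  complete graph \<open>K\<^sub>n\<close>, and let \<open>f\<close> be 1 exactly at the two ends of one cycle edge. For \<open>m = n\<close>,
  going once around \<open>C\<^sub>n\<close> (next to the clique \<open>K\<^sub>n\<close>) puts these two 1s next to each other,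
  which \<open>rho02\<close> forbids. For odd \<open>m \<noteq> n\<close>, an \<open>m\<close>-clique forces \<open>m < n\<close>; a closed walk of odd
  length \<open>m < n\<close> cannot run in \<open>C\<^sub>n\<close>, and an \<open>m\<close>-clique cannot either since \<open>C\<^sub>n\<close> has no
  triangles. So both stay in \<open>K\<^sub>n\<close>, where \<open>f\<close> vanishes.\<close>

definition cycle_hom :: "('a \<Rightarrow> 'a \<Rightarrow> bool) \<Rightarrow> 'a list \<Rightarrow> bool" where
  "cycle_hom R xs \<longleftrightarrow> (\<forall>i < length xs. R (xs ! i) (xs ! (Suc i mod length xs)))"

definition clique_hom :: "('a \<Rightarrow> 'a \<Rightarrow> bool) \<Rightarrow> 'a list \<Rightarrow> bool" where
  "clique_hom R xs \<longleftrightarrow> (\<forall>i < length xs. \<forall>j < length xs. i \<noteq> j \<longrightarrow> R (xs ! i) (xs ! j))"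

lemma cycle_hom_map: "cycle_hom R (map f xs) \<longleftrightarrow> cycle_hom (\<lambda>x y. R (f x) (f y)) xs"
  unfolding cycle_hom_def by (metis length_map mod_less_divisor not_less0 gr0I nth_map)

lemma clique_hom_map: "clique_hom R (map f xs) \<longleftrightarrow> clique_hom (\<lambda>x y. R (f x) (f y)) xs"
  by (simp add: clique_hom_def)

lemma cycle_hom_cong:
  "(\<And>x y. x \<in> set xs \<Longrightarrow> y \<in> set xs \<Longrightarrow> R x y \<longleftrightarrow> S x y) \<Longrightarrow> cycle_hom R xs \<longleftrightarrow> cycle_hom S xs"
  unfolding cycle_hom_def by (metis length_greater_0_conv list.size(3) mod_less_divisor not_less0 nth_mem)

lemma clique_hom_cong:
  "(\<And>x y. x \<in> set xs \<Longrightarrow> y \<in> set xs \<Longrightarrow> R x y \<longleftrightarrow> S x y) \<Longrightarrow> clique_hom R xs \<longleftrightarrow> clique_hom S xs"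
  unfolding clique_hom_def by (meson nth_mem)

lemma cycle_hom_All: "(\<forall>t\<in>T. cycle_hom (R t) xs) \<longleftrightarrow> cycle_hom (\<lambda>x y. \<forall>t\<in>T. R t x y) xs"
  unfolding cycle_hom_def by blast

lemma clique_hom_All: "(\<forall>t\<in>T. clique_hom (R t) xs) \<longleftrightarrow> clique_hom (\<lambda>x y. \<forall>t\<in>T. R t x y) xs"
  unfolding clique_hom_def by blast

lemma cycle_hom_triple: "cycle_hom R [a, b, c] \<longleftrightarrow> R a b \<and> R b c \<and> R c a"
  unfolding cycle_hom_def by (simp add: less_Suc_eq) blast

lemma cycle_hom_invariant:
  assumes walk: "cycle_hom R xs" and pres: "\<And>x y. R x y \<Longrightarrow> P x \<Longrightarrow> P y"
    and "x \<in> set xs" "P x"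
  shows "\<forall>y\<in>set xs. P y"
proof -
  obtain i where i: "i < length xs" "xs ! i = x" using \<open>x \<in> set xs\<close> by (metis in_set_conv_nth)
  have P_shift: "P (xs ! ((i + k) mod length xs))" for k
  proof (induction k)
    case 0 then show ?case using i \<open>P x\<close> by simp
  next
    case (Suc k)
    have "(i + k) mod length xs < length xs" using i(1) by (intro mod_less_divisor) linarith
    then have "R (xs ! ((i + k) mod length xs)) (xs ! (Suc ((i + k) mod length xs) mod length xs))"
      using walk by (simp add: cycle_hom_def)
    then show ?case using Suc pres by (simp add: mod_Suc_eq)
  qed
  have "P (xs ! j)" if "j < length xs" for j
  proof -
    have "(i + (length xs - i + j)) mod length xs = j" using that i(1) by simp
    then show ?thesis using P_shift by metis
  qed
  then show ?thesis by (metis in_set_conv_nth)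
qed

lemma cycle_hom_clique_hom_if_complete:
  assumes "\<And>x y. x \<in> set xs \<Longrightarrow> y \<in> set xs \<Longrightarrow> R x y"
  shows "cycle_hom R xs" "clique_hom R xs"
  using assms cycle_hom_cong[of xs R "\<lambda>_ _. True"] clique_hom_cong[of xs R "\<lambda>_ _. True"]
  by (simp_all add: cycle_hom_def clique_hom_def)

lemma clique_hom_distinct:
  assumes "clique_hom R xs" "\<And>x. x \<in> set xs \<Longrightarrow> \<not> R x x"
  shows "distinct xs"
  using assms by (metis clique_hom_def distinct_conv_nth nth_mem)

lemma RC02_iff: "x \<in> RC02 m \<longleftrightarrow> length x = m \<and> set x \<subseteq> {0,1} \<and> cycle_hom (in_rel rho02) x"
  by (auto simp: RC02_def cycle_hom_def)

lemma RK02_iff: "x \<in> RK02 m \<longleftrightarrow> length x = m \<and> set x \<subseteq> {0,1} \<and> clique_hom (in_rel rho02) x"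
  by (auto simp: RK02_def clique_hom_def)

lemma map_in_R02_iff:
  assumes "length xs = 2 * m"
  shows "map f xs \<in> R02 m \<longleftrightarrow> map f (take m xs) \<in> RC02 m \<and> map f (drop m xs) \<in> RK02 m"
proof
  assume "map f xs \<in> R02 m"
  then obtain y z where "map f xs = y @ z" "y \<in> RC02 m" "z \<in> RK02 m"
    by (auto simp: R02_def)
  moreover from this have "length y = m" by (simp add: RC02_def)
  ultimately show "map f (take m xs) \<in> RC02 m \<and> map f (drop m xs) \<in> RK02 m"
    by (metis append_eq_conv_conj drop_map take_map)
next
  assume "map f (take m xs) \<in> RC02 m \<and> map f (drop m xs) \<in> RK02 m"
  then show "map f xs \<in> R02 m"
    unfolding R02_def by (metis (mono_tags, lifting) append_take_drop_id map_append mem_Collect_eq)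
qed

definition orth :: "nat list \<Rightarrow> nat list \<Rightarrow> bool" where
  "orth x y \<longleftrightarrow> (\<forall>t < length x. (x ! t, y ! t) \<in> rho02)"

lemma columns_in_R02_iff:
  assumes len: "length rows = 2 * m" and rows: "\<forall>r\<in>set rows. length r = k \<and> set r \<subseteq> {0,1}"
  shows "(\<forall>t<k. map (\<lambda>r. r ! t) rows \<in> R02 m) \<longleftrightarrow>
    cycle_hom orth (take m rows) \<and> clique_hom orth (drop m rows)"
proof -
  have col01: "set (map (\<lambda>r. r ! t) xs) \<subseteq> {0,1}" if "set xs \<subseteq> set rows" "t < k" for xs t
    using that rows by (auto dest!: nth_mem[of t] simp: subset_iff)
  have orth_k: "orth x y \<longleftrightarrow> (\<forall>t\<in>{..<k}. in_rel rho02 (x ! t) (y ! t))" if "x \<in> set rows" for x y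
    using that rows by (auto simp: orth_def)
  have "(\<forall>t<k. map (\<lambda>r. r ! t) rows \<in> R02 m) \<longleftrightarrow>
      (\<forall>t\<in>{..<k}. cycle_hom (\<lambda>x y. in_rel rho02 (x ! t) (y ! t)) (take m rows)) \<and>
      (\<forall>t\<in>{..<k}. clique_hom (\<lambda>x y. in_rel rho02 (x ! t) (y ! t)) (drop m rows))"
    using len col01[OF set_take_subset] col01[OF set_drop_subset]
    by (auto simp: map_in_R02_iff RC02_iff RK02_iff cycle_hom_map clique_hom_map)
  also have "\<dots> \<longleftrightarrow> cycle_hom orth (take m rows) \<and> clique_hom orth (drop m rows)"
    unfolding cycle_hom_All clique_hom_All
    by (intro conj_cong cycle_hom_cong clique_hom_cong)
       (metis orth_k in_set_takeD in_set_dropD)+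
  finally show ?thesis .
qed

lemma all_list_split_iff:
  "(\<forall>xs. length xs = 2 * m \<longrightarrow> P xs) \<longleftrightarrow> (\<forall>ys zs. length ys = m \<longrightarrow> length zs = m \<longrightarrow> P (ys @ zs))"
proof (intro iffI allI impI)
  fix xs :: "'a list"
  assume split: "\<forall>ys zs. length ys = m \<longrightarrow> length zs = m \<longrightarrow> P (ys @ zs)" and "length xs = 2 * m"
  then have "P (take m xs @ drop m xs)" by (intro split[rule_format]) simp_all
  then show "P xs" by simp
qed simp

lemma pPol_R02_iff:
  assumes p: "is_pfun p"
  defines "f \<equiv> \<lambda>x. the (snd p x)"
  shows "p \<in> pPol (2 * m) (R02 m) \<longleftrightarrow>
    (\<forall>cs ks. length cs = m \<longrightarrow> length ks = m \<longrightarrow> set cs \<union> set ks \<subseteq> dom (snd p) \<longrightarrow>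
       cycle_hom orth cs \<longrightarrow> clique_hom orth ks \<longrightarrow>
       cycle_hom (in_rel rho02) (map f cs) \<and> clique_hom (in_rel rho02) (map f ks))"
    (is "_ \<longleftrightarrow> ?rhs")
proof -
  have cols: "(\<forall>j<fst p. map (\<lambda>r. r ! j) (cs @ ks) \<in> R02 m) \<longleftrightarrow> cycle_hom orth cs \<and> clique_hom orth ks"
    and vals: "map f (cs @ ks) \<in> R02 m \<longleftrightarrow>
      cycle_hom (in_rel rho02) (map f cs) \<and> clique_hom (in_rel rho02) (map f ks)"
    if "length cs = m" "length ks = m" "set cs \<union> set ks \<subseteq> dom (snd p)" for cs ks
  proof -
    show "(\<forall>j<fst p. map (\<lambda>r. r ! j) (cs @ ks) \<in> R02 m) \<longleftrightarrow> cycle_hom orth cs \<and> clique_hom orth ks"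
      using that p columns_in_R02_iff[of "cs @ ks" m "fst p"] by (auto simp: is_pfun_def)
    have "set (map f (cs @ ks)) \<subseteq> {0,1}"
      using that p by (force simp: is_pfun_def f_def)
    then show "map f (cs @ ks) \<in> R02 m \<longleftrightarrow>
      cycle_hom (in_rel rho02) (map f cs) \<and> clique_hom (in_rel rho02) (map f ks)"
      using that map_in_R02_iff[of "cs @ ks" m f] by (simp add: RC02_iff RK02_iff)
  qed
  have "p \<in> pPol (2 * m) (R02 m) \<longleftrightarrow> (\<forall>rows. length rows = 2 * m \<longrightarrow>
      set rows \<subseteq> dom (snd p) \<longrightarrow> (\<forall>j<fst p. map (\<lambda>r. r ! j) rows \<in> R02 m) \<longrightarrow> map f rows \<in> R02 m)"
    using p by (auto simp: pPol_def f_def subset_iff)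
  also have "\<dots> \<longleftrightarrow> (\<forall>cs ks. length cs = m \<longrightarrow> length ks = m \<longrightarrow> set (cs @ ks) \<subseteq> dom (snd p) \<longrightarrow>
      (\<forall>j<fst p. map (\<lambda>r. r ! j) (cs @ ks) \<in> R02 m) \<longrightarrow> map f (cs @ ks) \<in> R02 m)"
    by (rule all_list_split_iff)
  also have "\<dots> \<longleftrightarrow> ?rhs"
    using cols vals by auto
  finally show ?thesis .
qed

text \<open>Coordinates are the ordered pairs \<open>(a, b)\<close> of non-adjacent vertices, loops included,
  encoded as \<open>a * N + b\<close>; the row of \<open>v\<close> marks the pairs containing \<open>v\<close>. Two rows thus have
  no common 1 exactly when their vertices are adjacent.\<close>

definition graph_vec :: "(nat \<Rightarrow> nat \<Rightarrow> bool) \<Rightarrow> nat \<Rightarrow> nat \<Rightarrow> nat list" where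
  "graph_vec G N v = map (\<lambda>t. if (t div N = v \<or> t mod N = v) \<and> \<not> G (t div N) (t mod N) then 1 else 0)
     [0..<N * N]"

lemma length_graph_vec [simp]: "length (graph_vec G N v) = N * N"
  by (simp add: graph_vec_def)

lemma set_graph_vec: "set (graph_vec G N v) \<subseteq> {0,1}"
  by (auto simp: graph_vec_def)

lemma pair_index_less:
  fixes a b N :: nat
  assumes "a < N" "b < N"
  shows "a * N + b < N * N"
proof -
  have "a * N + b < Suc a * N" using assms(2) by simp
  also have "\<dots> \<le> N * N" using assms(1) by (intro mult_le_mono1) simp
  finally show ?thesis .
qed

lemma nth_graph_vec_pair:
  assumes "a < N" "b < N"
  shows "graph_vec G N v ! (a * N + b) = (if (a = v \<or> b = v) \<and> \<not> G a b then 1 else 0)"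
  using assms pair_index_less[OF assms] by (simp add: graph_vec_def)

lemma all_less_square_iff: "(\<forall>t < N * N::nat. P t) \<longleftrightarrow> (\<forall>a < N. \<forall>b < N. P (a * N + b))"
proof -
  have "t div N < N \<and> t mod N < N \<and> t = t div N * N + t mod N" if "t < N * N" for t
    using that by (cases "N = 0") (auto simp: less_mult_imp_div_less)
  then show ?thesis using pair_index_less by metis
qed

lemma orth_graph_vec_iff:
  assumes "symp G" "\<forall>w<N. \<not> G w w" "u < N" "v < N"
  shows "orth (graph_vec G N u) (graph_vec G N v) \<longleftrightarrow> G u v"
proof -
  have "orth (graph_vec G N u) (graph_vec G N v) \<longleftrightarrow>
      (\<forall>a<N. \<forall>b<N. \<not> ((a = u \<or> b = u) \<and> (a = v \<or> b = v) \<and> \<not> G a b))"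
  proof -
    have "(graph_vec G N u ! (a * N + b), graph_vec G N v ! (a * N + b)) \<in> rho02 \<longleftrightarrow>
        \<not> ((a = u \<or> b = u) \<and> (a = v \<or> b = v) \<and> \<not> G a b)" if "a < N" "b < N" for a b
      using that by (simp add: nth_graph_vec_pair rho02_def)
    then show ?thesis unfolding orth_def length_graph_vec all_less_square_iff by simp
  qed
  also have "\<dots> \<longleftrightarrow> G u v"
  proof
    assume "\<forall>a<N. \<forall>b<N. \<not> ((a = u \<or> b = u) \<and> (a = v \<or> b = v) \<and> \<not> G a b)"
    then show "G u v" using assms(3,4) by blast
  next
    assume "G u v"
    moreover from this have "u \<noteq> v" using assms(2,3) by blast
    ultimately show "\<forall>a<N. \<forall>b<N. \<not> ((a = u \<or> b = u) \<and> (a = v \<or> b = v) \<and> \<not> G a b)"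
      using assms(1) by (auto dest: sympD)
  qed
  finally show ?thesis .
qed

lemma inj_on_graph_vec:
  assumes "\<forall>w<N. \<not> G w w"
  shows "inj_on (graph_vec G N) {..<N}"
proof (rule inj_onI)
  fix u v assume "u \<in> {..<N}" "v \<in> {..<N}" "graph_vec G N u = graph_vec G N v"
  then have "graph_vec G N u ! (u * N + u) = graph_vec G N v ! (u * N + u)" by simp
  with assms \<open>u \<in> {..<N}\<close> \<open>v \<in> {..<N}\<close> show "u = v"
    by (simp add: nth_graph_vec_pair split: if_splits)
qed

definition graph_pfun :: "(nat \<Rightarrow> nat \<Rightarrow> bool) \<Rightarrow> nat \<Rightarrow> (nat \<Rightarrow> nat) \<Rightarrow> pfun" where
  "graph_pfun G N h = (N * N, \<lambda>x. if x \<in> graph_vec G N ` {..<N}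
     then Some (h (the_inv_into {..<N} (graph_vec G N) x)) else None)"

lemma dom_graph_pfun: "dom (snd (graph_pfun G N h)) = graph_vec G N ` {..<N}"
  by (auto simp: graph_pfun_def dom_def)

lemma graph_pfun_graph_vec:
  assumes "\<forall>w<N. \<not> G w w" "v < N"
  shows "the (snd (graph_pfun G N h) (graph_vec G N v)) = h v"
  using assms by (simp add: graph_pfun_def the_inv_into_f_f inj_on_graph_vec)

lemma is_pfun_graph_pfun:
  assumes "0 < N" "\<forall>w<N. \<not> G w w" "\<forall>v<N. h v \<in> {0,1}"
  shows "is_pfun (graph_pfun G N h)"
  unfolding is_pfun_def
proof (intro conjI ballI allI impI)
  show "1 \<le> fst (graph_pfun G N h)" using assms(1) by (simp add: graph_pfun_def)
  fix x assume "x \<in> dom (snd (graph_pfun G N h))"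
  then obtain v where "x = graph_vec G N v" by (auto simp: dom_graph_pfun)
  then show "length x = fst (graph_pfun G N h)" "set x \<subseteq> {0,1}"
    using set_graph_vec by (simp_all add: graph_pfun_def)
next
  fix x y assume "snd (graph_pfun G N h) x = Some y"
  then show "y \<in> {0,1}"
    using assms by (auto simp: graph_pfun_def the_inv_into_f_f inj_on_graph_vec split: if_splits)
qed

lemma graph_pfun_in_Tzero:
  assumes "0 < N" "\<forall>w<N. \<not> G w w" "\<forall>v<N. h v \<in> {0,1}"
  shows "graph_pfun G N h \<in> Tzero"
proof -
  have "graph_vec G N v \<noteq> replicate (N * N) 0" if "v < N" for v
  proof
    assume "graph_vec G N v = replicate (N * N) 0"
    then have "graph_vec G N v ! (v * N + v) = 0"
      using pair_index_less[OF that that] by simp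
    then show False using assms(2) that by (simp add: nth_graph_vec_pair)
  qed
  then have "replicate (N * N) 0 \<notin> graph_vec G N ` {..<N}" by (metis imageE lessThan_iff)
  moreover have "is_pfun (graph_pfun G N h)" using assms by (rule is_pfun_graph_pfun)
  moreover have "fst (graph_pfun G N h) = N * N" by (simp add: graph_pfun_def)
  ultimately show ?thesis
    by (simp add: Tzero_def dom_graph_pfun)
qed

lemma graph_pfun_in_pPol_R02_iff:
  assumes "0 < N" "symp G" "\<forall>w<N. \<not> G w w" "\<forall>v<N. h v \<in> {0,1}"
  shows "graph_pfun G N h \<in> pPol (2 * m) (R02 m) \<longleftrightarrow>
    (\<forall>us vs. length us = m \<longrightarrow> length vs = m \<longrightarrow> set us \<union> set vs \<subseteq> {..<N} \<longrightarrow>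
       cycle_hom G us \<longrightarrow> clique_hom G vs \<longrightarrow>
       cycle_hom (in_rel rho02) (map h us) \<and> clique_hom (in_rel rho02) (map h vs))"
proof -
  let ?vec = "graph_vec G N" and ?f = "\<lambda>x. the (snd (graph_pfun G N h) x)"
  have hom: "cycle_hom orth (map ?vec us) \<longleftrightarrow> cycle_hom G us"
    "clique_hom orth (map ?vec us) \<longleftrightarrow> clique_hom G us"
    "map ?f (map ?vec us) = map h us"
    if "set us \<subseteq> {..<N}" for us
  proof -
    have "orth (?vec u) (?vec v) \<longleftrightarrow> G u v" if "u \<in> set us" "v \<in> set us" for u v
      using that \<open>set us \<subseteq> {..<N}\<close> orth_graph_vec_iff[OF assms(2,3)] by blast
    then show "cycle_hom orth (map ?vec us) \<longleftrightarrow> cycle_hom G us"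
      "clique_hom orth (map ?vec us) \<longleftrightarrow> clique_hom G us"
      unfolding cycle_hom_map clique_hom_map by (simp_all cong: cycle_hom_cong clique_hom_cong)
    show "map ?f (map ?vec us) = map h us"
      using that assms(3) by (auto simp: graph_pfun_graph_vec)
  qed
  have lists: "\<exists>us. xs = map ?vec us \<and> set us \<subseteq> {..<N}" if "set xs \<subseteq> ?vec ` {..<N}" for xs
    using that lists_image[of ?vec "{..<N}"] by (auto simp: lists_eq_set)
  have p: "is_pfun (graph_pfun G N h)" using assms(1,3,4) by (rule is_pfun_graph_pfun)
  show ?thesis
    unfolding pPol_R02_iff[OF p] dom_graph_pfun
  proof (intro iffI allI impI)
    fix us vs :: "nat list"
    assume H: "\<forall>cs ks. length cs = m \<longrightarrow> length ks = m \<longrightarrow> set cs \<union> set ks \<subseteq> ?vec ` {..<N} \<longrightarrow>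
       cycle_hom orth cs \<longrightarrow> clique_hom orth ks \<longrightarrow>
       cycle_hom (in_rel rho02) (map ?f cs) \<and> clique_hom (in_rel rho02) (map ?f ks)"
      and "length us = m" "length vs = m" and uv: "set us \<union> set vs \<subseteq> {..<N}"
      and "cycle_hom G us" "clique_hom G vs"
    moreover have us: "set us \<subseteq> {..<N}" and vs: "set vs \<subseteq> {..<N}" using uv by auto
    moreover have "set (map ?vec us) \<union> set (map ?vec vs) \<subseteq> ?vec ` {..<N}"
      using uv by auto
    ultimately have "cycle_hom (in_rel rho02) (map ?f (map ?vec us)) \<and>
        clique_hom (in_rel rho02) (map ?f (map ?vec vs))"
      using H[rule_format, of "map ?vec us" "map ?vec vs"] hom(1)[OF us] hom(2)[OF vs] by simp
    then show "cycle_hom (in_rel rho02) (map h us) \<and> clique_hom (in_rel rho02) (map h vs)"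
      unfolding hom(3)[OF us] hom(3)[OF vs] .
  next
    fix cs ks :: "nat list list"
    assume H: "\<forall>us vs. length us = m \<longrightarrow> length vs = m \<longrightarrow> set us \<union> set vs \<subseteq> {..<N} \<longrightarrow>
       cycle_hom G us \<longrightarrow> clique_hom G vs \<longrightarrow>
       cycle_hom (in_rel rho02) (map h us) \<and> clique_hom (in_rel rho02) (map h vs)"
      and "length cs = m" "length ks = m" "set cs \<union> set ks \<subseteq> ?vec ` {..<N}"
      "cycle_hom orth cs" "clique_hom orth ks"
    moreover obtain us vs where cs: "cs = map ?vec us" and ks: "ks = map ?vec vs"
      and us: "set us \<subseteq> {..<N}" and vs: "set vs \<subseteq> {..<N}"
      using lists \<open>set cs \<union> set ks \<subseteq> ?vec ` {..<N}\<close> by (metis Un_subset_iff)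
    ultimately have "cycle_hom (in_rel rho02) (map h us) \<and> clique_hom (in_rel rho02) (map h vs)"
      using H[rule_format, of us vs] hom(1)[OF us] hom(2)[OF vs] by simp
    then show "cycle_hom (in_rel rho02) (map ?f cs) \<and> clique_hom (in_rel rho02) (map ?f ks)"
      unfolding cs ks hom(3)[OF us] hom(3)[OF vs] .
  qed
qed

definition cycle_adj :: "nat \<Rightarrow> nat \<Rightarrow> nat \<Rightarrow> bool" where
  "cycle_adj n a b \<longleftrightarrow> b = Suc a mod n \<or> a = Suc b mod n"

lemma cycle_adj_step:
  assumes "a < n" "b < n" "cycle_adj n a b"
  obtains d :: int where "d = 1 \<or> d = -1" "int b mod int n = (int a + d) mod int n"
proof (cases "b = Suc a mod n")
  case True
  then have "int b mod int n = (int a + 1) mod int n" by (simp add: of_nat_mod add.commute)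
  then show ?thesis using that by blast
next
  case False
  with assms(3) have "a = Suc b mod n" by (simp add: cycle_adj_def)
  then have "(int a - 1) mod int n = (int b + 1 - 1) mod int n"
    by (simp add: of_nat_mod mod_diff_left_eq add.commute)
  then have "int b mod int n = (int a + -1) mod int n" using assms(2) by simp
  then show ?thesis using that by blast
qed

lemma even_sum_plus_minus_one_iff:
  fixes d :: "nat \<Rightarrow> int"
  assumes "\<And>i. i < m \<Longrightarrow> d i = 1 \<or> d i = -1"
  shows "even (\<Sum>i<m. d i) \<longleftrightarrow> even m"
  using assms
proof (induction m)
  case (Suc m)
  then have "even (\<Sum>i<m. d i) \<longleftrightarrow> even m" by simp
  moreover have "odd (d m)" using Suc.prems[of m] by auto
  ultimately show ?case by simp
qed simp

lemma cycle_hom_cycle_adj_even_length: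
  assumes walk: "cycle_hom (cycle_adj n) ps" and verts: "set ps \<subseteq> {..<n}" and short: "length ps < n"
  shows "even (length ps)"
proof (cases "ps = []")
  case False
  define m where "m = length ps"
  txt \<open>Each step moves by \<open>\<pm>1\<close> modulo \<open>n\<close>. The steps add up to a multiple of \<open>n\<close> of absolute
    value at most \<open>m < n\<close>, hence to 0, which needs an even number of them.\<close>
  have m0: "0 < m" using False by (simp add: m_def)
  have "\<forall>i<m. \<exists>d::int. (d = 1 \<or> d = -1) \<and>
      int (ps ! (Suc i mod m)) mod int n = (int (ps ! i) + d) mod int n"
  proof (intro allI impI)
    fix i assume "i < m"
    moreover from this have "Suc i mod m < m" by simp
    ultimately have "ps ! i < n" "ps ! (Suc i mod m) < n" "cycle_adj n (ps ! i) (ps ! (Suc i mod m))"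
      using walk verts nth_mem by (fastforce simp: cycle_hom_def m_def)+
    then obtain d where "d = 1 \<or> d = -1"
      "int (ps ! (Suc i mod m)) mod int n = (int (ps ! i) + d) mod int n"
      by (rule cycle_adj_step)
    then show "\<exists>d::int. (d = 1 \<or> d = -1) \<and>
        int (ps ! (Suc i mod m)) mod int n = (int (ps ! i) + d) mod int n" by blast
  qed
  then obtain d :: "nat \<Rightarrow> int" where d: "\<And>i. i < m \<Longrightarrow> d i = 1 \<or> d i = -1"
    and step: "\<And>i. i < m \<Longrightarrow> int (ps ! (Suc i mod m)) mod int n = (int (ps ! i) + d i) mod int n"
    by metis
  have telescope: "int (ps ! (l mod m)) mod int n = (int (ps ! 0) + (\<Sum>i<l. d i)) mod int n" if "l \<le> m" for l
    using that
  proof (induction l)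
    case (Suc l)
    then have "l < m" by simp
    then have "int (ps ! (Suc l mod m)) mod int n = (int (ps ! l) mod int n + d l) mod int n"
      using step by (simp add: mod_add_left_eq)
    also have "int (ps ! l) mod int n = (int (ps ! 0) + (\<Sum>i<l. d i)) mod int n"
      using Suc \<open>l < m\<close> by simp
    finally show ?case by (simp add: mod_add_left_eq add.assoc)
  qed simp
  define S where "S = (\<Sum>i<m. d i)"
  have "int n dvd S"
    using telescope[of m] m0 by (simp add: S_def mod_eq_dvd_iff)
  moreover have "\<bar>S\<bar> < int n"
  proof -
    have "\<bar>S\<bar> \<le> (\<Sum>i<m. \<bar>d i\<bar>)" unfolding S_def by (rule sum_abs)
    also have "\<dots> = (\<Sum>i<m. 1)" using d by (intro sum.cong refl) (metis abs_1 abs_minus_cancel lessThan_iff)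
    also have "\<dots> = int m" by simp
    finally show ?thesis using short by (simp add: m_def)
  qed
  ultimately have "S = 0" by (metis abs_of_nat dvd_imp_le_int leD)
  then show ?thesis
    using even_sum_plus_minus_one_iff[of m d] d by (simp add: S_def m_def)
qed simp

lemma cycle_adj_irrefl:
  assumes "2 \<le> n" "a < n"
  shows "\<not> cycle_adj n a a"
  using cycle_hom_cycle_adj_even_length[of n "[a]"] assms by (auto simp: cycle_hom_def)

lemma cycle_adj_triangle_free:
  assumes "3 < n" "a < n" "b < n" "c < n" "cycle_adj n a b" "cycle_adj n b c" "cycle_adj n c a"
  shows False
proof -
  have "cycle_hom (cycle_adj n) [a, b, c]" using assms by (simp add: cycle_hom_triple)
  from cycle_hom_cycle_adj_even_length[OF this] assms show False by simp
qed

definition cycle_clique :: "nat \<Rightarrow> nat \<Rightarrow> nat \<Rightarrow> bool" where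
  "cycle_clique n u v \<longleftrightarrow> (u < n \<and> v < n \<and> cycle_adj n u v) \<or> (n \<le> u \<and> n \<le> v \<and> u \<noteq> v)"

definition edge_mark :: "nat \<Rightarrow> nat \<Rightarrow> nat" where
  "edge_mark n v = (if v = 0 \<or> v = n - 1 then 1 else 0)"

lemma symp_cycle_clique: "symp (cycle_clique n)"
  by (auto simp: symp_def cycle_clique_def cycle_adj_def)

lemma cycle_clique_irrefl: "2 \<le> n \<Longrightarrow> \<not> cycle_clique n v v"
  using cycle_adj_irrefl by (auto simp: cycle_clique_def)

lemma clique_hom_cycle_clique_length_le:
  assumes "2 \<le> n" "clique_hom (cycle_clique n) vs" "set vs \<subseteq> {..<2 * n}"
  shows "length vs \<le> n"
proof -
  have "distinct vs" using assms(1,2) cycle_clique_irrefl by (blast intro: clique_hom_distinct)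
  moreover have "set vs \<subseteq> {..<n} \<or> set vs \<subseteq> {n..<2 * n}"
  proof (rule ccontr)
    assume "\<not> ?thesis"
    then obtain i j where "i < length vs" "j < length vs" "vs ! i < n" "n \<le> vs ! j"
      using assms(3) by (auto simp: subset_iff in_set_conv_nth)
    moreover from this have "i \<noteq> j" by auto
    ultimately show False using assms(2) unfolding clique_hom_def cycle_clique_def by fastforce
  qed
  then have "card (set vs) \<le> n"
    using card_mono[OF finite_lessThan, of "set vs" n]
      card_mono[OF finite_atLeastLessThan, of "set vs" n "2 * n"] by auto
  ultimately show ?thesis by (simp add: distinct_card)
qed

lemma graph_pfun_cycle_clique_notin_pPol:
  assumes "3 \<le> n"
  shows "graph_pfun (cycle_clique n) (2 * n) (edge_mark n) \<notin> pPol (2 * n) (R02 n)"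
proof -
  have "cycle_hom (cycle_clique n) [0..<n]"
    by (auto simp: cycle_hom_def cycle_clique_def cycle_adj_def)
  moreover have "clique_hom (cycle_clique n) [n..<2 * n]"
    by (auto simp: clique_hom_def cycle_clique_def)
  moreover have "\<not> cycle_hom (in_rel rho02) (map (edge_mark n) [0..<n])"
  proof -
    have "Suc (n - 1) mod n = 0" using assms by simp
    then show ?thesis using assms
      by (auto simp: cycle_hom_def edge_mark_def rho02_def intro!: exI[of _ "n - 1"])
  qed
  moreover have "graph_pfun (cycle_clique n) (2 * n) (edge_mark n) \<in> pPol (2 * n) (R02 n) \<longleftrightarrow>
    (\<forall>us vs. length us = n \<longrightarrow> length vs = n \<longrightarrow> set us \<union> set vs \<subseteq> {..<2 * n} \<longrightarrow>
       cycle_hom (cycle_clique n) us \<longrightarrow> clique_hom (cycle_clique n) vs \<longrightarrow>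
       cycle_hom (in_rel rho02) (map (edge_mark n) us) \<and> clique_hom (in_rel rho02) (map (edge_mark n) vs))"
    using assms cycle_clique_irrefl
    by (intro graph_pfun_in_pPol_R02_iff symp_cycle_clique) (auto simp: edge_mark_def)
  moreover have "set [0..<n] \<union> set [n..<2 * n] \<subseteq> {..<2 * n}" by auto
  ultimately show ?thesis by (metis length_upt diff_zero mult_2 add_diff_cancel_left')
qed

lemma cycle_hom_cycle_clique_odd_short:
  assumes walk: "cycle_hom (cycle_clique n) us" and "odd (length us)" "length us < n"
  shows "\<forall>u\<in>set us. n \<le> u"
proof (rule ccontr)
  assume "\<not> ?thesis"
  then obtain u where "u \<in> set us" "u < n" by (auto simp: not_le)
  then have below: "\<forall>v\<in>set us. v < n"
    using cycle_hom_invariant[OF walk, of "\<lambda>v. v < n"] by (auto simp: cycle_clique_def)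
  then have "cycle_hom (cycle_clique n) us \<longleftrightarrow> cycle_hom (cycle_adj n) us"
    by (intro cycle_hom_cong) (auto simp: cycle_clique_def)
  with walk have "cycle_hom (cycle_adj n) us" by simp
  then have "even (length us)" using cycle_hom_cycle_adj_even_length below assms(3) by auto
  with assms(2) show False by simp
qed

lemma clique_hom_cycle_clique_large:
  assumes "3 < n" and clique: "clique_hom (cycle_clique n) vs" and "3 \<le> length vs"
  shows "\<forall>v\<in>set vs. n \<le> v"
proof (rule ccontr)
  assume "\<not> ?thesis"
  then obtain i where i: "i < length vs" "vs ! i < n" by (auto simp: in_set_conv_nth not_le)
  have "\<exists>j l::nat. j < 3 \<and> l < 3 \<and> j \<noteq> i \<and> l \<noteq> i \<and> j \<noteq> l" by presburger
  then obtain j l where jl: "j < length vs" "l < length vs" "j \<noteq> i" "l \<noteq> i" "j \<noteq> l"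
    using assms(3) by (meson order_less_le_trans)
  then have "cycle_clique n (vs ! i) (vs ! j)" "cycle_clique n (vs ! j) (vs ! l)"
    "cycle_clique n (vs ! l) (vs ! i)"
    using clique i(1) by (auto simp: clique_hom_def)
  with i(2) have "vs ! j < n" "vs ! l < n" "cycle_adj n (vs ! i) (vs ! j)"
    "cycle_adj n (vs ! j) (vs ! l)" "cycle_adj n (vs ! l) (vs ! i)"
    by (auto simp: cycle_clique_def)
  then show False using assms(1) i(2) cycle_adj_triangle_free by blast
qed

lemma graph_pfun_cycle_clique_in_pPol:
  assumes n: "3 \<le> n" and m: "odd m" "3 \<le> m" "m \<noteq> n"
  shows "graph_pfun (cycle_clique n) (2 * n) (edge_mark n) \<in> pPol (2 * m) (R02 m)"
proof -
  have "cycle_hom (in_rel rho02) (map (edge_mark n) us) \<and> clique_hom (in_rel rho02) (map (edge_mark n) vs)"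
    if "length us = m" "length vs = m" "set us \<union> set vs \<subseteq> {..<2 * n}"
      and walk: "cycle_hom (cycle_clique n) us" and clique: "clique_hom (cycle_clique n) vs" for us vs
  proof -
    have "m \<le> n" using clique_hom_cycle_clique_length_le[OF _ clique] n that(2,3) by auto
    with m have "m < n" by simp
    then have "\<forall>u\<in>set us \<union> set vs. n \<le> u"
      using cycle_hom_cycle_clique_odd_short[OF walk] clique_hom_cycle_clique_large[OF _ clique] m that(1,2)
      by auto
    then have "edge_mark n u = 0" if "u \<in> set us \<union> set vs" for u
    proof -
      have "n \<le> u" using that \<open>\<forall>u\<in>set us \<union> set vs. n \<le> u\<close> by blast
      then show ?thesis using n by (simp add: edge_mark_def)
    qed
    then show ?thesis by (auto intro!: cycle_hom_clique_hom_if_complete simp: rho02_def)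
  qed
  then show ?thesis
    using n cycle_clique_irrefl
    by (subst graph_pfun_in_pPol_R02_iff) (auto intro: symp_cycle_clique simp: edge_mark_def)
qed

theorem mainTheorem18:
  fixes n :: nat and M :: "nat set"
  assumes "n \<in> Nhat" and "M \<subseteq> Nhat - {n}"
  shows "\<not> (Tzero \<inter> (\<Inter>m\<in>M. pPol (2 * m) (R02 m)) \<subseteq> pPol (2 * n) (R02 n))"
proof
  assume incl: "Tzero \<inter> (\<Inter>m\<in>M. pPol (2 * m) (R02 m)) \<subseteq> pPol (2 * n) (R02 n)"
  have n: "3 \<le> n" using assms(1) by (simp add: Nhat_def)
  let ?f = "graph_pfun (cycle_clique n) (2 * n) (edge_mark n)"
  have "?f \<in> Tzero"
    using n cycle_clique_irrefl by (intro graph_pfun_in_Tzero) (auto simp: edge_mark_def)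
  moreover have "?f \<in> pPol (2 * m) (R02 m)" if "m \<in> M" for m
    using that assms(2) n by (intro graph_pfun_cycle_clique_in_pPol) (auto simp: Nhat_def)
  ultimately have "?f \<in> pPol (2 * n) (R02 n)" using incl by blast
  with graph_pfun_cycle_clique_notin_pPol n show False by blast
qed

end
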